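(* Let $\theta$ be a labelled tree (as defined below) such that $\Psi_{n_\ell}(\omega\cdot\nu_\ell)\neq0$ for every line $\ell$ of $\theta$ with $n_\ell\ge0$, and let $T$ be a self-energy cluster of $\theta$ on scale $n\ge0$ which is renormalised, i.e. no subgraph of $T$ is a self-energy cluster of $\theta$. Then for every $0\le p\le n$, $$\mathfrak{N}_p(T)\le 2^{-(m_p-2)}K(T),$$ where $\mathfrak{N}_p(T)$ is the number of lines of $T$ with scale $\ge p$ and $K(T):=\sum_{v\in N(T)}|\nu_v|$, $N(T)$ being the set of nodes of $T$.
   Context: Notation: $\omega\in\mathbb{R}^d$ satisfies the Bryuno condition; $\alpha_m(\omega):=\inf_{0<|\nu|\le2^m}|\omega\cdot\nu|$ with $|\nu|$ the $\ell^1$ norm; $m_0=0$, $m_{n+1}=m_n+p_n+1$ with $p_n:=\max\{q\ge0:\alpha_{m_n}(\omega)<2\alpha_{m_n+q}(\omega)\}$. $\chi$ is an even $C^\infty$ function, non-increasing in $|x|$, equal to $1$ for $|x|\le1/2$ and $0$ for $|x|\ge1$; $\chi_{-1}\equiv1$, $\chi_n(x)=\chi(4x/\alpha_{m_n}(\omega))$, $\psi_n=1-\chi_n$ ($n\ge0$), $\Psi_n=\chi_{n-1}\psi_n$ ($n\ge0$); thus $\Psi_n(x)\neq0$ implies $\alpha_{m_n}(\omega)/8<|x|<\alpha_{m_{n-1}}(\omega)/4$ (with $\alpha_{m_{-1}}:=+\infty$). Trees: a tree $\theta$ is a finite rooted tree whose root has exactly one incident line (the root line); all other vertices are nodes; lines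 are oriented toward the root, and each line $\ell=\ell_v$ is identified with the node $v$ it leaves. Write $w\preceq v$ if $v$ lies on the path from $w$ to the root. Each node $v$ carries a mode $\nu_v\in\mathbb{Z}^d$; each line $\ell_v$ carries the momentum $\nu_{\ell_v}=\sum_{w\preceq v}\nu_w$, required to be nonzero for all lines except possibly the root line; each line carries a scale $n_\ell$, with $n_\ell=-1$ if $\nu_\ell=0$ and $n_\ell\in\{0,1,2,\dots\}$ otherwise. A cluster on scale $n$ is a maximal connected subgraph (set of nodes together with the lines of $\theta$ joining them) all of whose lines have scale $\le n$ and at least one line of which has scale $n$; a line enters (exits) a subgraph $T$ if it connects a node outside $T$ to a node in $T$ (a node in $T$ to a node outside). A self-energy cluster is either a cluster with exactly one entering line $\ell'$ and one exiting line $\ell$ satisfying $\nu_\ell=\nu_{\ell'}$, or (scale $-1$) a single node $v$ with $\nu_v=0$ having exactly one entering line. *)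

theory Defs
  imports "HOL-Analysis.Analysis"
begin

definition dotp :: "real^'d \<Rightarrow> int^'d \<Rightarrow> real" where
  "dotp \<omega> \<nu> = (\<Sum>i\<in>UNIV. \<omega>$i * real_of_int (\<nu>$i))"

definition norm1 :: "int^'d \<Rightarrow> int" where
  "norm1 \<nu> = (\<Sum>i\<in>UNIV. \<bar>\<nu>$i\<bar>)"

definition alpha :: "real^'d \<Rightarrow> nat \<Rightarrow> real" where
  "alpha \<omega> m = Inf {\<bar>dotp \<omega> \<nu>\<bar> | \<nu>. 0 < norm1 \<nu> \<and> norm1 \<nu> \<le> 2 ^ m}"

definition bryuno :: "real^'d \<Rightarrow> bool" where
  "bryuno \<omega> \<longleftrightarrow> (\<forall>\<nu>. \<nu> \<noteq> 0 \<longrightarrow> dotp \<omega> \<nu> \<noteq> 0)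
      \<and> summable (\<lambda>m. ln (1 / alpha \<omega> m) / 2 ^ m)"

text \<open>p_n as a function of m_n\<close>
definition pnum :: "real^'d \<Rightarrow> nat \<Rightarrow> nat" where
  "pnum \<omega> mn = (GREATEST q. alpha \<omega> mn < 2 * alpha \<omega> (mn + q))"

primrec mseq :: "real^'d \<Rightarrow> nat \<Rightarrow> nat" where
  "mseq \<omega> 0 = 0"
| "mseq \<omega> (Suc n) = mseq \<omega> n + pnum \<omega> (mseq \<omega> n) + 1"

definition cutoff :: "(real \<Rightarrow> real) \<Rightarrow> bool" where
  "cutoff chi \<longleftrightarrow> (\<forall>k x. ((deriv ^^ k) chi) differentiable (at x))
     \<and> (\<forall>x. chi (- x) = chi x)
     \<and> (\<forall>x y. \<bar>x\<bar> \<le> \<bar>y\<bar> \<longrightarrow> chi y \<le> chi x)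
     \<and> (\<forall>x. \<bar>x\<bar> \<le> 1/2 \<longrightarrow> chi x = 1)
     \<and> (\<forall>x. \<bar>x\<bar> \<ge> 1 \<longrightarrow> chi x = 0)"

definition chiN :: "(real \<Rightarrow> real) \<Rightarrow> real^'d \<Rightarrow> nat \<Rightarrow> real \<Rightarrow> real" where
  "chiN chi \<omega> n x = chi (4 * x / alpha \<omega> (mseq \<omega> n))"

definition PsiN :: "(real \<Rightarrow> real) \<Rightarrow> real^'d \<Rightarrow> nat \<Rightarrow> real \<Rightarrow> real" where
  "PsiN chi \<omega> n x = (if n = 0 then 1 else chiN chi \<omega> (n - 1) x) * (1 - chiN chi \<omega> n x)"

text \<open>A tree: finite set V of nodes; par v = Some u means the line l_v leaving v
  enters node u; par v = None means l_v is the root line (enters the root).\<close>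

definition up :: "('v \<Rightarrow> 'v option) \<Rightarrow> nat \<Rightarrow> 'v \<Rightarrow> 'v option" where
  "up par k w = ((\<lambda>x. Option.bind x par) ^^ k) (Some w)"

definition is_tree :: "'v set \<Rightarrow> ('v \<Rightarrow> 'v option) \<Rightarrow> bool" where
  "is_tree V par \<longleftrightarrow> finite V
     \<and> (\<exists>!r. r \<in> V \<and> par r = None)
     \<and> (\<forall>v\<in>V. \<forall>u. par v = Some u \<longrightarrow> u \<in> V)
     \<and> (\<forall>v\<in>V. \<exists>k. up par k v = None)"

definition preceq :: "'v set \<Rightarrow> ('v \<Rightarrow> 'v option) \<Rightarrow> 'v \<Rightarrow> 'v \<Rightarrow> bool" where
  "preceq V par w v \<longleftrightarrow> w \<in> V \<and> (\<exists>k. up par k w = Some v)"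

definition mom :: "'v set \<Rightarrow> ('v \<Rightarrow> 'v option) \<Rightarrow> ('v \<Rightarrow> int^'d) \<Rightarrow> 'v \<Rightarrow> int^'d" where
  "mom V par \<nu> v = (\<Sum>w\<in>{w. preceq V par w v}. \<nu> w)"

definition labelled_tree ::
  "'v set \<Rightarrow> ('v \<Rightarrow> 'v option) \<Rightarrow> ('v \<Rightarrow> int^'d) \<Rightarrow> ('v \<Rightarrow> int) \<Rightarrow> bool" where
  "labelled_tree V par \<nu> sc \<longleftrightarrow> is_tree V par
     \<and> (\<forall>v\<in>V. par v \<noteq> None \<longrightarrow> mom V par \<nu> v \<noteq> 0)
     \<and> (\<forall>v\<in>V. (mom V par \<nu> v = 0 \<longrightarrow> sc v = -1) \<and> (mom V par \<nu> v \<noteq> 0 \<longrightarrow> sc v \<ge> 0))"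

section \<open>Subgraphs and clusters (a subgraph is given by its node set S)\<close>

text \<open>lines joining two nodes of S (identified with the node they leave)\<close>
definition lines_in :: "('v \<Rightarrow> 'v option) \<Rightarrow> 'v set \<Rightarrow> 'v set" where
  "lines_in par S = {v \<in> S. \<exists>u\<in>S. par v = Some u}"

definition adj :: "('v \<Rightarrow> 'v option) \<Rightarrow> 'v set \<Rightarrow> 'v \<Rightarrow> 'v \<Rightarrow> bool" where
  "adj par S a b \<longleftrightarrow> a \<in> S \<and> b \<in> S \<and> (par a = Some b \<or> par b = Some a)"

definition connected_sub :: "('v \<Rightarrow> 'v option) \<Rightarrow> 'v set \<Rightarrow> bool" where
  "connected_sub par S \<longleftrightarrow> S \<noteq> {} \<and> (\<forall>a\<in>S. \<forall>b\<in>S. (adj par S)\<^sup>*\<^sup>* a b)"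

definition scale_le_sub :: "'v set \<Rightarrow> ('v \<Rightarrow> 'v option) \<Rightarrow> ('v \<Rightarrow> int) \<Rightarrow> int \<Rightarrow> 'v set \<Rightarrow> bool" where
  "scale_le_sub V par sc n S \<longleftrightarrow> S \<subseteq> V \<and> connected_sub par S
     \<and> (\<forall>v\<in>lines_in par S. sc v \<le> n)"

definition cluster :: "'v set \<Rightarrow> ('v \<Rightarrow> 'v option) \<Rightarrow> ('v \<Rightarrow> int) \<Rightarrow> int \<Rightarrow> 'v set \<Rightarrow> bool" where
  "cluster V par sc n S \<longleftrightarrow> scale_le_sub V par sc n S
     \<and> (\<forall>S'. scale_le_sub V par sc n S' \<and> S \<subseteq> S' \<longrightarrow> S' = S)
     \<and> (\<exists>v\<in>lines_in par S. sc v = n)"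

definition entering :: "'v set \<Rightarrow> ('v \<Rightarrow> 'v option) \<Rightarrow> 'v set \<Rightarrow> 'v set" where
  "entering V par S = {v \<in> V - S. \<exists>u\<in>S. par v = Some u}"

definition exiting :: "('v \<Rightarrow> 'v option) \<Rightarrow> 'v set \<Rightarrow> 'v set" where
  "exiting par S = {v \<in> S. \<not> (\<exists>u\<in>S. par v = Some u)}"

definition self_energy_on :: "'v set \<Rightarrow> ('v \<Rightarrow> 'v option) \<Rightarrow> ('v \<Rightarrow> int^'d) \<Rightarrow> ('v \<Rightarrow> int)
    \<Rightarrow> int \<Rightarrow> 'v set \<Rightarrow> bool" where
  "self_energy_on V par \<nu> sc n S \<longleftrightarrow> cluster V par sc n S
     \<and> (\<exists>l l'. entering V par S = {l'} \<and> exiting par S = {l}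
               \<and> mom V par \<nu> l = mom V par \<nu> l')"

definition self_energy :: "'v set \<Rightarrow> ('v \<Rightarrow> 'v option) \<Rightarrow> ('v \<Rightarrow> int^'d) \<Rightarrow> ('v \<Rightarrow> int)
    \<Rightarrow> 'v set \<Rightarrow> bool" where
  "self_energy V par \<nu> sc S \<longleftrightarrow> (\<exists>n. self_energy_on V par \<nu> sc n S)
     \<or> (\<exists>v\<in>V. S = {v} \<and> \<nu> v = 0 \<and> card (entering V par S) = 1)"

definition renormalised :: "'v set \<Rightarrow> ('v \<Rightarrow> 'v option) \<Rightarrow> ('v \<Rightarrow> int^'d) \<Rightarrow> ('v \<Rightarrow> int)
    \<Rightarrow> 'v set \<Rightarrow> bool" where
  "renormalised V par \<nu> sc T \<longleftrightarrow> (\<forall>S. S \<subset> T \<longrightarrow> \<not> self_energy V par \<nu> sc S)"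

definition Np :: "('v \<Rightarrow> 'v option) \<Rightarrow> ('v \<Rightarrow> int) \<Rightarrow> int \<Rightarrow> 'v set \<Rightarrow> nat" where
  "Np par sc p T = card {v \<in> lines_in par T. sc v \<ge> p}"

definition Kf :: "('v \<Rightarrow> int^'d) \<Rightarrow> 'v set \<Rightarrow> int" where
  "Kf \<nu> T = (\<Sum>v\<in>T. norm1 (\<nu> v))"

end

theory Submission
  imports Defs
begin

(*
  On the support of Psi_s with s >= p >= 1 the divisor satisfies
  |omega.nu| < alpha_(m_p - 1) / 2. By definition of alpha, the momentum of every line of scale
  >= p, and every non-zero difference of two such momenta, therefore has l1-norm at least
  E = 2^m_p / 2.

  The line e entering T has scale > n (clusters are maximal). Mark e and
  the lines of T of scale >= p. Each marked line L of T owns a region: the nodes whose path to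
  the root meets L first among the marked lines. Regions are disjoint and the marked lines
  entering them (their feeders) are distinct and miss the topmost marked line, so at least half
  of the lines of scale >= p have at most one feeder. For such L the modes of the region sum to
  nu_L or to nu_L - nu_x, and the latter is non-zero since otherwise the region would be a
  self-energy cluster strictly inside T. Summing over the disjoint regions, N_p(T) E <= 2 K(T).
*)

subsection \<open>Paths towards the root\<close>

lemma up_0 [simp]: "up par 0 w = Some w"
  by (simp add: up_def)

lemma up_Suc: "up par (Suc k) w = Option.bind (up par k w) par"
  by (simp add: up_def)

lemma up_Suc': "up par (Suc k) w = (case par w of None \<Rightarrow> None | Some u \<Rightarrow> up par k u)"
proof (induction k arbitrary: w)
  case 0 then show ?case by (simp add: up_def split: option.splits)
next
  case (Suc k) then show ?case by (simp add: up_Suc split: option.splits)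
qed

lemma up_add: "up par (a + b) w = Option.bind (up par a w) (up par b)"
proof (induction b)
  case 0 then show ?case by (cases "up par a w") auto
next
  case (Suc b) then show ?case by (cases "up par a w") (auto simp: up_Suc)
qed

lemma up_diff: "up par a w = Some x \<Longrightarrow> a \<le> b \<Longrightarrow> up par (b - a) x = up par b w"
  using up_add[of par a "b - a" w] by simp

lemma up_cycle: assumes "up par d z = Some z" shows "up par (j * d) z = Some z"
proof (induction j)
  case (Suc j) then show ?case using up_add[of par d "j * d" z] assms by (simp add: add.commute)
qed simp

text \<open>In a tree the path from a node to the root never revisits a node,
  so the number of steps between two nodes on it is unique.\<close>
lemma up_steps_unique:
  assumes tree: "is_tree V par" and "w \<in> V" "up par a w = Some z" "up par b w = Some z"
  shows "a = b"
proof -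
  have False if ab: "a < b" "up par a w = Some z" "up par b w = Some z" for a b
  proof -
    obtain K where K: "up par K w = None" using tree \<open>w \<in> V\<close> unfolding is_tree_def by blast
    define d where "d = b - a"
    have "up par d z = Some z" using up_diff[OF ab(2)] ab by (simp add: d_def)
    then have "up par (a + K * d) w = Some z" using up_add[of par a "K * d" w] ab up_cycle by simp
    moreover have "K \<le> a + K * d"
    proof -
      have "K * 1 \<le> K * d" using ab by (intro mult_le_mono2) (simp add: d_def)
      then show ?thesis by (metis mult_1_right trans_le_add2)
    qed
    ultimately show False using K up_add[of par K "a + K * d - K" w] by simp
  qed
  then show ?thesis using assms(3,4) by (metis linorder_neq_iff)
qed

lemma up_Suc_not_self:
  assumes "is_tree V par" "w \<in> V" shows "up par (Suc k) w \<noteq> Some w"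
  using up_steps_unique[OF assms _ up_0] by blast

lemma adj_symp: "symp (adj par S)"
  unfolding adj_def symp_def by blast

lemma adj_rtranclp_sym: "(adj par S)\<^sup>*\<^sup>* a b \<Longrightarrow> (adj par S)\<^sup>*\<^sup>* b a"
  using sympD[OF symp_rtranclp[OF adj_symp]] .

lemma connected_subI:
  assumes "h \<in> S" "\<And>a. a \<in> S \<Longrightarrow> (adj par S)\<^sup>*\<^sup>* a h"
  shows "connected_sub par S"
  unfolding connected_sub_def using assms adj_rtranclp_sym by (meson empty_iff rtranclp_trans)

lemma rtranclp_crossing:
  assumes "r\<^sup>*\<^sup>* a b" "a \<in> A" "b \<notin> A" shows "\<exists>x y. r x y \<and> x \<in> A \<and> y \<notin> A"
  using assms
proof (induction rule: rtranclp_induct)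
  case (step y z) then show ?case by (cases "y \<in> A") auto
qed simp

lemma connected_sub_insert:
  assumes "connected_sub par T" "u \<in> T" "par e = Some u"
  shows "connected_sub par (insert e T)"
proof (rule connected_subI)
  let ?S = "insert e T"
  have mono: "(adj par T)\<^sup>*\<^sup>* a b \<Longrightarrow> (adj par ?S)\<^sup>*\<^sup>* a b" for a b
    by (rule rtranclp_mono[THEN predicate2D, rotated]) (auto simp: adj_def)
  fix a assume "a \<in> ?S"
  then show "(adj par ?S)\<^sup>*\<^sup>* a u"
  proof
    assume "a = e"
    then show ?thesis using assms(2,3) by (auto simp: adj_def)
  next
    assume "a \<in> T"
    then show ?thesis using assms(1,2) mono unfolding connected_sub_def by blast
  qed
qed (use assms(2) in blast)

lemma norm1_nonneg: "0 \<le> norm1 v"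
  unfolding norm1_def by (simp add: sum_nonneg)

lemma abs_component_le_norm1: "\<bar>v $ i\<bar> \<le> norm1 v"
  unfolding norm1_def by (rule member_le_sum) auto

lemma norm1_ge_1: assumes "v \<noteq> 0" shows "1 \<le> norm1 v"
proof -
  obtain i where "v $ i \<noteq> 0" using assms by (auto simp: vec_eq_iff)
  then show ?thesis using abs_component_le_norm1[of v i] by linarith
qed

lemma norm1_sum_le: "norm1 (sum f S) \<le> (\<Sum>w\<in>S. norm1 (f w))"
proof -
  have "norm1 (sum f S) = (\<Sum>i\<in>UNIV. \<bar>\<Sum>w\<in>S. f w $ i\<bar>)" unfolding norm1_def by simp
  also have "\<dots> \<le> (\<Sum>i\<in>UNIV. \<Sum>w\<in>S. \<bar>f w $ i\<bar>)" by (intro sum_mono sum_abs)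
  also have "\<dots> = (\<Sum>w\<in>S. norm1 (f w))" unfolding norm1_def by (rule sum.swap)
  finally show ?thesis .
qed

lemma finite_norm1_le: "finite {v :: int^'d. norm1 v \<le> B}"
proof (rule finite_subset)
  show "{v :: int^'d. norm1 v \<le> B} \<subseteq> vec_lambda ` (PiE UNIV (\<lambda>_. {-B..B}))"
  proof
    fix v :: "int^'d" assume "v \<in> {v. norm1 v \<le> B}"
    then have "\<bar>v $ i\<bar> \<le> B" for i using abs_component_le_norm1[of v] by (meson mem_Collect_eq order_trans)
    then have "v $ i \<in> {-B..B}" for i by (meson abs_le_D1 abs_le_D2 atLeastAtMost_iff minus_le_iff)
    then have "(\<lambda>i. v $ i) \<in> PiE UNIV (\<lambda>_. {-B..B})" by (auto simp: PiE_iff)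
    then show "v \<in> vec_lambda ` (PiE UNIV (\<lambda>_. {-B..B}))" by (metis image_eqI vec_lambda_eta)
  qed
qed (intro finite_imageI finite_PiE; simp)

lemma norm1_axis: "norm1 (axis i c) = \<bar>c\<bar>"
  unfolding norm1_def axis_def by (simp add: if_distrib[of abs] cong: if_cong)

lemma dotp_axis: "dotp \<omega> (axis i c) = \<omega> $ i * real_of_int c"
  unfolding dotp_def axis_def by (simp add: if_distrib[of real_of_int] if_distrib[of "(*) _"] cong: if_cong)

lemma dotp_diff: "dotp \<omega> (a - b) = dotp \<omega> a - dotp \<omega> b"
  unfolding dotp_def by (simp add: algebra_simps sum_subtractf)

subsection \<open>Small divisors \<open>\<alpha>\<^sub>m(\<omega>)\<close>\<close>

text \<open>The infimum defining \<open>\<alpha>\<^sub>m\<close> runs over a finite non-empty set of values.\<close>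
definition divisors :: "real^'d \<Rightarrow> nat \<Rightarrow> real set" where
  "divisors \<omega> m = (\<lambda>\<nu>. \<bar>dotp \<omega> \<nu>\<bar>) ` {\<nu>. 0 < norm1 \<nu> \<and> norm1 \<nu> \<le> 2 ^ m}"

lemma alpha_divisors: "alpha \<omega> m = Inf (divisors \<omega> m)"
  unfolding alpha_def divisors_def by (simp add: image_def) (metis (no_types, lifting))

lemma finite_divisors: "finite (divisors \<omega> m)"
  unfolding divisors_def by (rule finite_imageI, rule finite_subset[OF _ finite_norm1_le[of "2 ^ m"]]) auto

lemma divisors_nonempty: "divisors (\<omega> :: real^'d) m \<noteq> {}"
proof -
  have "axis undefined 1 \<in> {\<nu> :: int^'d. 0 < norm1 \<nu> \<and> norm1 \<nu> \<le> 2 ^ m}"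
    by (simp add: norm1_axis)
  then show ?thesis unfolding divisors_def by blast
qed

lemma alpha_le: "0 < norm1 \<nu> \<Longrightarrow> norm1 \<nu> \<le> 2 ^ m \<Longrightarrow> alpha \<omega> m \<le> \<bar>dotp \<omega> \<nu>\<bar>"
  unfolding alpha_divisors
  by (rule cInf_lower) (auto simp: divisors_def intro: bdd_below_finite finite_divisors[unfolded divisors_def])

lemma norm1_gt_of_small_divisor:
  "0 < norm1 \<nu> \<Longrightarrow> \<bar>dotp \<omega> \<nu>\<bar> < alpha \<omega> m \<Longrightarrow> 2 ^ m < norm1 \<nu>"
  using alpha_le[of \<nu> m \<omega>] by fastforce

lemma alpha_pos: assumes "bryuno \<omega>" shows "0 < alpha \<omega> m"
proof -
  have "alpha \<omega> m = Min (divisors \<omega> m)"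
    unfolding alpha_divisors using finite_divisors divisors_nonempty by (rule cInf_eq_Min)
  then have "alpha \<omega> m \<in> divisors \<omega> m" using Min_in[OF finite_divisors divisors_nonempty] by simp
  then obtain \<nu> where "0 < norm1 \<nu>" "alpha \<omega> m = \<bar>dotp \<omega> \<nu>\<bar>" unfolding divisors_def by blast
  moreover have "\<nu> \<noteq> 0" using \<open>0 < norm1 \<nu>\<close> by (auto simp: norm1_def)
  ultimately show ?thesis using assms unfolding bryuno_def by auto
qed

lemma alpha_antimono: assumes "m \<le> m'" shows "alpha \<omega> m' \<le> alpha \<omega> m"
  unfolding alpha_divisors
proof (rule cInf_superset_mono[OF divisors_nonempty])
  show "bdd_below (divisors \<omega> m')" using finite_divisors by (rule bdd_below_finite)
  have "(2::int) ^ m \<le> 2 ^ m'" using assms by (simp add: power_increasing)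
  then show "divisors \<omega> m \<subseteq> divisors \<omega> m'"
    unfolding divisors_def using order_trans by (intro image_mono) blast
qed

text \<open>In dimension at least two, Dirichlet's approximation theorem applied to a ratio
  \<open>\<omega>\<^sub>i/\<omega>\<^sub>j\<close> shows that \<open>\<alpha>\<^sub>m(\<omega>)\<close> becomes arbitrarily small.\<close>
lemma alpha_arbitrarily_small:
  fixes \<omega> :: "real^'d"
  assumes "CARD('d) \<ge> 2" "bryuno \<omega>" "\<epsilon> > 0"
  shows "\<exists>m. alpha \<omega> m < \<epsilon>"
proof -
  have "\<exists>i j :: 'd. i \<noteq> j"
  proof (rule ccontr)
    assume "\<not> ?thesis"
    then have "(UNIV :: 'd set) = {undefined}" by auto
    then have "CARD('d) = 1" by (metis card.empty card_insert_disjoint empty_iff finite.emptyI One_nat_def)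
    then show False using assms(1) by simp
  qed
  then obtain i j :: 'd where ij: "i \<noteq> j" by blast
  have \<omega>_nz: "\<omega> $ t \<noteq> 0" for t
  proof -
    have "dotp \<omega> (axis t 1) \<noteq> 0" using assms(2) unfolding bryuno_def by simp
    then show ?thesis by (simp add: dotp_axis)
  qed
  define N where "N = nat \<lceil>\<bar>\<omega> $ j\<bar> / \<epsilon>\<rceil> + 1"
  then have "N > 0" by simp
  then obtain h k where hk: "0 < k" "\<bar>of_int k * (\<omega> $ i / \<omega> $ j) - of_int h\<bar> < 1 / real N"
    using Dirichlet_approx by metis
  define \<nu> where "\<nu> = axis i k - axis j h"
  have "dotp \<omega> \<nu> = \<omega> $ j * (of_int k * (\<omega> $ i / \<omega> $ j) - of_int h)"
    using \<omega>_nz[of j] unfolding \<nu>_def dotp_diff dotp_axis by (simp add: field_simps)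
  then have "\<bar>dotp \<omega> \<nu>\<bar> = \<bar>\<omega> $ j\<bar> * \<bar>of_int k * (\<omega> $ i / \<omega> $ j) - of_int h\<bar>"
    by (simp add: abs_mult)
  also have "\<dots> \<le> \<bar>\<omega> $ j\<bar> * (1 / real N)" using hk(2) by (intro mult_left_mono) auto
  also have "\<dots> < \<epsilon>"
  proof -
    have "\<bar>\<omega> $ j\<bar> / \<epsilon> < real N" unfolding N_def by linarith
    then show ?thesis using assms(3) \<open>N > 0\<close> by (simp add: divide_less_eq mult.commute)
  qed
  finally have small: "\<bar>dotp \<omega> \<nu>\<bar> < \<epsilon>" .
  have "\<nu> $ i = k" using ij unfolding \<nu>_def axis_def by simp
  then have pos: "0 < norm1 \<nu>" using abs_component_le_norm1[of \<nu> i] hk(1) by linarith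
  define m where "m = nat (norm1 \<nu>)"
  have "int m < int (2 ^ m)" by (simp only: of_nat_less_iff less_exp)
  then have "norm1 \<nu> \<le> 2 ^ m" using pos unfolding m_def by simp
  then show ?thesis using alpha_le[OF pos] small by (meson le_less_trans)
qed

text \<open>The maximum defining \<open>p\<^sub>n\<close> exists, so alpha_(m_n) < 2 alpha_(m_n + p_n).\<close>
lemma alpha_pnum:
  fixes \<omega> :: "real^'d"
  assumes "CARD('d) \<ge> 2" "bryuno \<omega>"
  shows "alpha \<omega> mn < 2 * alpha \<omega> (mn + pnum \<omega> mn)"
proof -
  have a0: "alpha \<omega> mn > 0" using alpha_pos[OF assms(2)] .
  obtain m where m: "alpha \<omega> m < alpha \<omega> mn / 2"
    using alpha_arbitrarily_small[OF assms, of "alpha \<omega> mn / 2"] a0 by auto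
  have bounded: "q \<le> m" if "alpha \<omega> mn < 2 * alpha \<omega> (mn + q)" for q
    using that m alpha_antimono[of m "mn + q" \<omega>] by (cases "q \<le> m") auto
  show ?thesis unfolding pnum_def
    by (rule GreatestI_nat[where k=0 and b=m]) (use a0 bounded in auto)
qed

lemma mseq_mono: "a \<le> b \<Longrightarrow> mseq \<omega> a \<le> mseq \<omega> b"
  by (induction b) (auto simp: le_Suc_eq)

lemma mseq_pred: "1 \<le> p \<Longrightarrow> mseq \<omega> p - 1 = mseq \<omega> (p - 1) + pnum \<omega> (mseq \<omega> (p - 1))"
  by (cases p) auto

text \<open>On the support of \<open>\<Psi>\<^sub>s\<close> with \<open>s \<ge> p \<ge> 1\<close> the divisor satisfies
  |x| < alpha_(m_p - 1) / 2: the cut-off chi_(s-1) gives |x| < alpha_(m_(s-1)) / 4, and the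
  choice of p_(p-1) loses at most a factor two.\<close>
lemma PsiN_support:
  fixes \<omega> :: "real^'d"
  assumes "CARD('d) \<ge> 2" "bryuno \<omega>" "cutoff chi" "1 \<le> p" "p \<le> s" "PsiN chi \<omega> s x \<noteq> 0"
  shows "\<bar>x\<bar> < alpha \<omega> (mseq \<omega> p - 1) / 2"
proof -
  define a where "a = alpha \<omega> (mseq \<omega> (s - 1))"
  have "chi (4 * x / a) \<noteq> 0"
    using assms(4-6) unfolding PsiN_def chiN_def a_def by (auto split: if_splits)
  then have "\<bar>4 * x / a\<bar> < 1" using assms(3) unfolding cutoff_def by (meson not_less)
  moreover have "a > 0" unfolding a_def using alpha_pos[OF assms(2)] .
  ultimately have "\<bar>x\<bar> < a / 4" by (simp add: abs_divide abs_mult divide_less_eq)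
  moreover have "a \<le> alpha \<omega> (mseq \<omega> (p - 1))"
    unfolding a_def using assms(5) by (intro alpha_antimono mseq_mono) simp
  moreover have "alpha \<omega> (mseq \<omega> (p - 1)) < 2 * alpha \<omega> (mseq \<omega> p - 1)"
    using alpha_pnum[OF assms(1,2), of "mseq \<omega> (p - 1)"] mseq_pred[OF assms(4), where \<omega>=\<omega>] by simp
  ultimately show ?thesis by linarith
qed

subsection \<open>Clusters with one exiting line\<close>

lemma reach_exit:
  assumes tree: "is_tree V par" and "T \<subseteq> V" and ex: "exiting par T = {l}" and "w \<in> T"
  shows "\<exists>k. up par k w = Some l"
proof -
  obtain K where "up par K w = None" using tree assms(2,4) unfolding is_tree_def by blast
  then show ?thesis using \<open>w \<in> T\<close>
  proof (induction K arbitrary: w)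
    case (Suc K)
    show ?case
    proof (cases "w = l")
      case False
      then obtain u where u: "u \<in> T" "par w = Some u"
        using Suc.prems ex unfolding exiting_def by blast
      moreover have "up par K u = None" using Suc.prems u by (simp add: up_Suc')
      ultimately obtain k where "up par k u = Some l" using Suc.IH by blast
      then show ?thesis using u by (auto simp: up_Suc' intro: exI[of _ "Suc k"])
    qed (auto intro: exI[of _ 0])
  qed simp
qed

text \<open>A line entering \<open>T\<close> cannot itself be entered from \<open>T\<close>: that would close a cycle
  through the exiting line.\<close>
lemma no_line_into_entering:
  assumes tree: "is_tree V par" and "T \<subseteq> V" and "exiting par T = {l}"
    and e: "e \<notin> T" "u \<in> T" "par e = Some u" and v: "v \<in> T"
  shows "par v \<noteq> Some e"
proof
  assume ve: "par v = Some e"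
  then have "v \<in> exiting par T" using v e(1) unfolding exiting_def by auto
  then have "v = l" using assms(3) by blast
  obtain k where "up par k u = Some l" using reach_exit[OF tree assms(2,3) e(2)] by blast
  then have "up par (Suc (Suc k)) u = Some u"
    using up_add[of par k 2 u] ve e(3) \<open>v = l\<close> by (simp add: numeral_2_eq_2 up_Suc')
  then show False using up_Suc_not_self[OF tree] e(2) assms(2) by blast
qed

text \<open>The line entering a self-energy cluster on scale \<open>n\<close> has scale \<open>> n\<close>:
  otherwise it could be added to the cluster, contradicting maximality.\<close>
lemma entering_scale_gt:
  assumes tree: "is_tree V par" and cl: "cluster V par sc n T"
    and ent: "entering V par T = {e}" and ex: "exiting par T = {l}"
  shows "n < sc e"
proof (rule ccontr)
  assume "\<not> n < sc e"
  have TV: "T \<subseteq> V" and conn: "connected_sub par T" and lT: "\<forall>v\<in>lines_in par T. sc v \<le> n"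
    using cl unfolding cluster_def scale_le_sub_def by auto
  obtain u where e: "e \<in> V" "e \<notin> T" "u \<in> T" "par e = Some u"
    using ent unfolding entering_def by blast
  have "sc v \<le> n" if v: "v \<in> lines_in par (insert e T)" for v
  proof -
    obtain w where w: "v \<in> insert e T" "w \<in> insert e T" "par v = Some w"
      using v unfolding lines_in_def by blast
    have "v \<in> T \<Longrightarrow> w \<noteq> e" using no_line_into_entering[OF tree TV ex e(2-4)] w(3) by blast
    then have "v = e \<or> v \<in> lines_in par T" using w unfolding lines_in_def by auto
    then show ?thesis using \<open>\<not> n < sc e\<close> lT by auto
  qed
  then have "scale_le_sub V par sc n (insert e T)"
    unfolding scale_le_sub_def using TV e connected_sub_insert[OF conn e(3,4)] by blast
  then have "insert e T = T" using cl unfolding cluster_def by blast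
  then show False using e(2) by blast
qed

subsection \<open>Counting high-scale lines of a renormalised cluster\<close>

locale high_scale_cluster =
  fixes V :: "'v set" and par :: "'v \<Rightarrow> 'v option" and \<nu> :: "'v \<Rightarrow> int^'d"
    and sc :: "'v \<Rightarrow> int" and T :: "'v set" and p :: int and e :: 'v and E :: real
  assumes tree: "is_tree V par"
    and T_sub: "T \<subseteq> V"
    and entering_T: "entering V par T = {e}"
    and scale_e: "p \<le> sc e"
    and renorm: "renormalised V par \<nu> sc T"
    and momentum_large: "\<And>v. v \<in> V \<Longrightarrow> par v \<noteq> None \<Longrightarrow> p \<le> sc v
        \<Longrightarrow> E \<le> real_of_int (norm1 (mom V par \<nu> v))"
    and momentum_gap: "\<And>v x. v \<in> V \<Longrightarrow> x \<in> V \<Longrightarrow> par v \<noteq> None \<Longrightarrow> par x \<noteq> None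
        \<Longrightarrow> p \<le> sc v \<Longrightarrow> p \<le> sc x \<Longrightarrow> mom V par \<nu> v \<noteq> mom V par \<nu> x
        \<Longrightarrow> E \<le> real_of_int (norm1 (mom V par \<nu> v - mom V par \<nu> x))"
begin

definition high :: "'v set" where
  "high = {v \<in> lines_in par T. p \<le> sc v}"

definition marked :: "'v set" where
  "marked = insert e high"

definition region :: "'v \<Rightarrow> 'v set" where
  "region L = {w \<in> T. \<exists>a. up par a w = Some L \<and> (\<forall>j<a. up par j w \<notin> Some ` marked)}"

definition feeders :: "'v \<Rightarrow> 'v set" where
  "feeders L = {x \<in> marked. \<exists>u \<in> region L. par x = Some u}"

abbreviation subtree :: "'v \<Rightarrow> 'v set" where
  "subtree x \<equiv> {w. preceq V par w x}"

lemma finite_V: "finite V"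
  using tree unfolding is_tree_def by blast

lemma finite_subtree: "finite (subtree x)"
  using finite_V by (rule finite_subset[rotated]) (auto simp: preceq_def)

lemma e_facts: "e \<in> V" "e \<notin> T" "\<exists>u\<in>T. par e = Some u"
  using entering_T unfolding entering_def by auto

lemma high_sub_T: "high \<subseteq> T"
  unfolding high_def lines_in_def by auto

lemma high_parent: "L \<in> high \<Longrightarrow> \<exists>u\<in>T. par L = Some u"
  unfolding high_def lines_in_def by auto

lemma marked_sub_V: "marked \<subseteq> V"
  using high_sub_T T_sub e_facts unfolding marked_def by auto

lemma marked_parent: "x \<in> marked \<Longrightarrow> \<exists>u\<in>T. par x = Some u"
  using e_facts high_parent unfolding marked_def by auto

lemma marked_scale: "x \<in> marked \<Longrightarrow> p \<le> sc x"
  using scale_e unfolding marked_def high_def by auto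

lemma finite_T: "finite T"
  using finite_V T_sub finite_subset by blast

lemma finite_high: "finite high"
  using finite_T high_sub_T finite_subset by blast

lemma finite_marked: "finite marked"
  using finite_high unfolding marked_def by simp

lemma card_marked: "card marked = card high + 1"
proof -
  have "e \<notin> high" using high_sub_T e_facts(2) by blast
  then show ?thesis using finite_high unfolding marked_def by simp
qed

lemma path_into_T_via_e:
  "z \<in> V \<Longrightarrow> z \<notin> T \<Longrightarrow> up par c z = Some y \<Longrightarrow> y \<in> T \<Longrightarrow> \<exists>j<c. up par j z = Some e"
proof (induction c arbitrary: z)
  case (Suc c)
  then obtain z' where z': "par z = Some z'" "up par c z' = Some y"
    by (auto simp: up_Suc' split: option.splits)
  have "z' \<in> V" using tree Suc.prems(1) z'(1) unfolding is_tree_def by blast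
  show ?case
  proof (cases "z' \<in> T")
    case True
    then have "z \<in> entering V par T" using Suc.prems z' unfolding entering_def by auto
    then show ?thesis using entering_T by auto
  next
    case False
    then obtain j where "j < c" "up par j z' = Some e" using Suc.IH[OF \<open>z' \<in> V\<close> _ z'(2) Suc.prems(4)] by blast
    then show ?thesis using z'(1) by (intro exI[of _ "Suc j"]) (auto simp: up_Suc')
  qed
qed simp

lemma region_sub_T: "region L \<subseteq> T"
  unfolding region_def by auto

lemma region_self: "L \<in> high \<Longrightarrow> L \<in> region L"
  using high_sub_T unfolding region_def by (auto intro!: exI[of _ 0])

lemma marked_in_region: assumes "x \<in> marked" "x \<in> region L" shows "x = L"
proof -
  obtain a where a: "up par a x = Some L" "\<forall>j<a. up par j x \<notin> Some ` marked"
    using assms(2) unfolding region_def by blast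
  then have "a = 0" using assms(1) by (cases a) auto
  then show ?thesis using a(1) by simp
qed

lemma region_no_mark_before:
  assumes "w \<in> region L" "up par a w = Some L" shows "\<forall>j<a. up par j w \<notin> Some ` marked"
proof -
  obtain a' where a': "up par a' w = Some L" "\<forall>j<a'. up par j w \<notin> Some ` marked"
    using assms(1) unfolding region_def by blast
  have "a = a'" using up_steps_unique[OF tree _ assms(2) a'(1)] assms(1) region_sub_T T_sub by blast
  then show ?thesis using a' by simp
qed

lemma region_step:
  assumes "L \<in> high" "w \<in> region L" "w \<noteq> L"
  shows "\<exists>u k. par w = Some u \<and> u \<in> region L \<and> up par k u = Some L"
proof -
  obtain a where a: "up par a w = Some L" "\<forall>j<a. up par j w \<notin> Some ` marked"
    using assms(2) unfolding region_def by blast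
  obtain k where k: "a = Suc k" using a(1) assms(3) by (cases a) auto
  obtain u where u: "par w = Some u" "up par k u = Some L"
    using a(1) k by (auto simp: up_Suc' split: option.splits)
  have "u \<in> V" using tree assms(2) region_sub_T T_sub u(1) unfolding is_tree_def by blast
  have no_mark: "\<forall>j<k. up par j u \<notin> Some ` marked"
    using a(2) u(1) k by (auto simp: up_Suc')
  have "u \<in> T"
  proof (rule ccontr)
    assume "u \<notin> T"
    then obtain j where "j < k" "up par j u = Some e"
      using path_into_T_via_e[OF \<open>u \<in> V\<close> _ u(2)] assms(1) high_sub_T by blast
    then show False using no_mark unfolding marked_def by blast
  qed
  then show ?thesis using u no_mark unfolding region_def by blast
qed

lemma parent_not_in_region: assumes "L \<in> high" "par L = Some u" shows "u \<notin> region L"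
proof
  assume "u \<in> region L"
  then obtain b where "up par b u = Some L" unfolding region_def by blast
  then have "up par (Suc b) L = Some L" using assms(2) by (simp add: up_Suc')
  then show False using up_Suc_not_self[OF tree] assms(1) high_sub_T T_sub by blast
qed

lemma region_proper: "L \<in> high \<Longrightarrow> region L \<subset> T"
  using region_sub_T high_parent parent_not_in_region by blast

lemma feeders_sub_marked: "feeders L \<subseteq> marked"
  unfolding feeders_def by auto

lemma finite_feeders: "finite (feeders L)"
  using finite_marked feeders_sub_marked finite_subset by blast

lemma feeder_reaches: assumes "x \<in> feeders L" shows "\<exists>c. up par (Suc c) x = Some L"
proof -
  obtain u where u: "u \<in> region L" "par x = Some u" using assms unfolding feeders_def by blast
  then obtain c where "up par c u = Some L" unfolding region_def by blast
  then show ?thesis using u by (auto simp: up_Suc')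
qed

lemma subtree_feeder: assumes "x \<in> feeders L" "preceq V par w x" shows "preceq V par w L"
proof -
  obtain c where c: "up par (Suc c) x = Some L" using feeder_reaches assms(1) by blast
  obtain b where b: "up par b w = Some x" "w \<in> V" using assms(2) unfolding preceq_def by blast
  have "up par (b + Suc c) w = Some L" using up_add[of par b "Suc c" w] b c by simp
  then show ?thesis using b unfolding preceq_def by blast
qed


lemma feeder_not_in_region: assumes "L \<in> high" "x \<in> feeders L" shows "x \<notin> region L"
proof
  assume "x \<in> region L"
  then have "x = L" using marked_in_region assms feeders_sub_marked by blast
  moreover obtain u where "u \<in> region L" "par x = Some u" using assms unfolding feeders_def by blast
  ultimately show False using parent_not_in_region assms(1) by blast
qed

lemma feeder_subtree_disjoint_region:
  assumes "x \<in> feeders L" "preceq V par w x" shows "w \<notin> region L"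
proof
  assume w: "w \<in> region L"
  obtain c where c: "up par (Suc c) x = Some L" using feeder_reaches assms(1) by blast
  obtain b where b: "up par b w = Some x" using assms(2) unfolding preceq_def by blast
  have "up par (b + Suc c) w = Some L" using up_add[of par b "Suc c" w] b c by simp
  then have "up par b w \<notin> Some ` marked" using region_no_mark_before[OF w] by simp
  then show False using b feeders_sub_marked assms(1) by auto
qed

lemma feeder_subtrees_disjoint:
  assumes "x \<in> feeders L" "x' \<in> feeders L" "x \<noteq> x'" "preceq V par w x" "preceq V par w x'"
  shows False
proof -
  have False if x: "x \<in> feeders L" "x' \<in> feeders L"
    and bb: "b < b'" "up par b w = Some x" "up par b' w = Some x'" and "w \<in> V" for x x' b b'
  proof -
    obtain u where u: "u \<in> region L" "par x = Some u" using x unfolding feeders_def by blast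
    have ub: "up par (Suc b) w = Some u" using bb u by (simp add: up_Suc)
    obtain au where au: "up par au u = Some L" using u unfolding region_def by blast
    obtain c' where c': "up par (Suc c') x' = Some L" using feeder_reaches x by blast
    have "up par (Suc b + au) w = Some L" using up_add[of par "Suc b" au w] ub au by simp
    moreover have "up par (b' + Suc c') w = Some L" using up_add[of par b' "Suc c'" w] bb c' by simp
    ultimately have "Suc b + au = b' + Suc c'" using up_steps_unique[OF tree \<open>w \<in> V\<close>] by blast
    then have "b' - Suc b < au" using bb by simp
    moreover have "up par (b' - Suc b) u = Some x'" using up_diff[OF ub] bb by simp
    ultimately show False using region_no_mark_before[OF u(1) au] x feeders_sub_marked by blast
  qed
  moreover obtain b where b: "up par b w = Some x" "w \<in> V" using assms(4) unfolding preceq_def by blast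
  moreover obtain b' where b': "up par b' w = Some x'" using assms(5) unfolding preceq_def by blast
  moreover have "b \<noteq> b'" using b b' assms(3) by auto
  ultimately show False using assms(1,2) by (metis linorder_neq_iff)
qed

text \<open>A node of the subtree of \<open>L\<close> outside its region lies below the last marked line on
  its path before \<open>L\<close>, which is a feeder of \<open>L\<close>.\<close>
lemma subtree_covered:
  assumes "L \<in> high" "preceq V par w L" "w \<notin> region L"
  shows "\<exists>x\<in>feeders L. preceq V par w x"
proof -
  obtain a where a: "up par a w = Some L" and "w \<in> V" using assms(2) unfolding preceq_def by blast
  have "\<exists>j<a. up par j w \<in> Some ` marked"
  proof (cases "w \<in> T")
    case True then show ?thesis using assms(3) a unfolding region_def by blast
  next
    case False
    then show ?thesis using path_into_T_via_e[OF \<open>w \<in> V\<close> False a] assms(1) high_sub_T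
      unfolding marked_def by blast
  qed
  define J where "J = (GREATEST j. j < a \<and> up par j w \<in> Some ` marked)"
  have J: "J < a" "up par J w \<in> Some ` marked"
    using GreatestI_ex_nat[where b=a, OF \<open>\<exists>j<a. _\<close>] unfolding J_def by auto
  have J_last: "j \<le> J" if "j < a" "up par j w \<in> Some ` marked" for j
    unfolding J_def using that by (intro Greatest_le_nat[where b=a]) auto
  obtain x where x: "up par J w = Some x" "x \<in> marked" using J by blast
  obtain u where u: "u \<in> T" "par x = Some u" using marked_parent x(2) by blast
  have uJ: "up par (Suc J) w = Some u" using x u by (simp add: up_Suc)
  have "up par i u \<notin> Some ` marked" if "i < a - Suc J" for i
  proof -
    have "Suc J + i < a" using that by linarith
    then show ?thesis using J_last[of "Suc J + i"] up_add[of par "Suc J" i w] uJ by auto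
  qed
  then have "u \<in> region L" using u up_diff[OF uJ, of a] a J(1) unfolding region_def by auto
  then show ?thesis using x u \<open>w \<in> V\<close> unfolding feeders_def preceq_def by blast
qed

lemma subtree_decomposition:
  assumes "L \<in> high"
  shows "subtree L = region L \<union> (\<Union>x\<in>feeders L. subtree x)"
proof (intro set_eqI iffI)
  fix w assume "w \<in> region L \<union> (\<Union>x\<in>feeders L. subtree x)"
  then show "w \<in> subtree L"
    using region_sub_T T_sub subtree_feeder unfolding region_def preceq_def by blast
qed (use subtree_covered[OF assms] in blast)

lemma momentum_decomposition:
  assumes "L \<in> high"
  shows "mom V par \<nu> L = sum \<nu> (region L) + (\<Sum>x\<in>feeders L. mom V par \<nu> x)"
proof -
  have finite_region: "finite (region L)" using finite_T region_sub_T finite_subset by blast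
  have "region L \<inter> (\<Union>x\<in>feeders L. subtree x) = {}"
    using feeder_subtree_disjoint_region by blast
  then have "mom V par \<nu> L = sum \<nu> (region L) + sum \<nu> (\<Union>x\<in>feeders L. subtree x)"
    unfolding mom_def subtree_decomposition[OF assms] using finite_region finite_feeders finite_subtree
    by (subst sum.union_disjoint) auto
  also have "sum \<nu> (\<Union>x\<in>feeders L. subtree x) = (\<Sum>x\<in>feeders L. sum \<nu> (subtree x))"
    using finite_feeders finite_subtree feeder_subtrees_disjoint by (subst sum.UNION_disjoint) auto
  finally show ?thesis unfolding mom_def by simp
qed


lemma entering_region: assumes "L \<in> high" shows "entering V par (region L) = feeders L"
proof (intro set_eqI iffI)
  fix x assume "x \<in> feeders L"
  then show "x \<in> entering V par (region L)"
    using feeder_not_in_region[OF assms] feeders_sub_marked marked_sub_V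
    unfolding feeders_def entering_def by blast
next
  fix v assume "v \<in> entering V par (region L)"
  then obtain u where u: "u \<in> region L" "par v = Some u" "v \<in> V" "v \<notin> region L"
    unfolding entering_def by blast
  have "v \<in> marked"
  proof (cases "v \<in> T")
    case False
    then have "v \<in> entering V par T" using u region_sub_T unfolding entering_def by blast
    then show ?thesis using entering_T unfolding marked_def by blast
  next
    case True
    obtain au where au: "up par au u = Some L" using u unfolding region_def by blast
    then have "up par (Suc au) v = Some L" using u by (simp add: up_Suc')
    with True u(4) obtain j where j: "j < Suc au" "up par j v \<in> Some ` marked"
      unfolding region_def by blast
    show ?thesis
    proof (cases j)
      case (Suc j')
      then have "up par j' u \<in> Some ` marked" "j' < au" using j u by (auto simp: up_Suc')
      then show ?thesis using region_no_mark_before[OF u(1) au] by blast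
    qed (use j in auto)
  qed
  then show "v \<in> feeders L" using u unfolding feeders_def by blast
qed

lemma exiting_region: "L \<in> high \<Longrightarrow> exiting par (region L) = {L}"
  using region_step parent_not_in_region region_self unfolding exiting_def by blast

lemma region_lines_scale: assumes "L \<in> high" "v \<in> lines_in par (region L)" shows "sc v < p"
proof (rule ccontr)
  assume "\<not> sc v < p"
  then have "v \<in> high" using assms(2) region_sub_T unfolding high_def lines_in_def by auto
  then have "v = L" using marked_in_region assms(2) unfolding marked_def lines_in_def by blast
  then show False using assms parent_not_in_region unfolding lines_in_def by blast
qed

lemma region_connected: assumes "L \<in> high" shows "connected_sub par (region L)"
proof (rule connected_subI[OF region_self[OF assms]])
  have "(adj par (region L))\<^sup>*\<^sup>* w L" if "w \<in> region L" "up par k w = Some L" for k w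
    using that
  proof (induction k arbitrary: w)
    case (Suc k)
    show ?case
    proof (cases "w = L")
      case False
      then obtain u where u: "par w = Some u" "u \<in> region L" using region_step[OF assms Suc.prems(1)] by blast
      then have "(adj par (region L))\<^sup>*\<^sup>* u L" using Suc by (simp add: up_Suc')
      moreover have "adj par (region L) w u" using u Suc.prems(1) unfolding adj_def by blast
      ultimately show ?thesis by (metis converse_rtranclp_into_rtranclp)
    qed simp
  qed simp
  then show "(adj par (region L))\<^sup>*\<^sup>* w L" if "w \<in> region L" for w
    using that unfolding region_def by blast
qed

text \<open>No connected subgraph with lines of scale \<open>q < p\<close> properly contains a region: the lines
  crossing its boundary are marked, hence of scale \<open>\<ge> p\<close>.\<close>
lemma region_maximal:
  assumes "L \<in> high" "q < p" "scale_le_sub V par sc q S" "region L \<subseteq> S"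
  shows "S = region L"
proof (rule ccontr)
  assume "S \<noteq> region L"
  then obtain z where z: "z \<in> S" "z \<notin> region L" using assms(4) by blast
  have "(adj par S)\<^sup>*\<^sup>* L z" using assms(3,4) region_self[OF assms(1)] z(1)
    unfolding scale_le_sub_def connected_sub_def by blast
  then obtain x y where xy: "adj par S x y" "x \<in> region L" "y \<notin> region L"
    using rtranclp_crossing[of "adj par S" L z "region L"] region_self[OF assms(1)] z(2) by blast
  have S_lines: "sc v \<le> q" if "v \<in> lines_in par S" for v
    using assms(3) that unfolding scale_le_sub_def by blast
  have xy_S: "x \<in> S" "y \<in> S" using xy(1) unfolding adj_def by auto
  consider "par x = Some y" | "par y = Some x" using xy(1) unfolding adj_def by blast
  then show False
  proof cases
    case 1
    then have "x \<in> exiting par (region L)" using xy(2,3) unfolding exiting_def by auto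
    then have "x = L" using exiting_region[OF assms(1)] by blast
    then have "sc L \<le> q" using 1 xy_S S_lines unfolding lines_in_def by blast
    moreover have "p \<le> sc L" using assms(1) unfolding high_def by blast
    ultimately show False using assms(2) by linarith
  next
    case 2
    have "S \<subseteq> V" using assms(3) unfolding scale_le_sub_def by blast
    then have "y \<in> entering V par (region L)" using 2 xy xy_S unfolding entering_def by blast
    then have "p \<le> sc y"
      using entering_region[OF assms(1)] feeders_sub_marked marked_scale by blast
    moreover have "sc y \<le> q" using 2 xy_S S_lines unfolding lines_in_def by blast
    ultimately show False using assms(2) by linarith
  qed
qed

lemma region_without_lines: assumes "L \<in> high" "lines_in par (region L) = {}" shows "region L = {L}"
  using region_step[OF assms(1)] region_self[OF assms(1)] assms(2) unfolding lines_in_def by blast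

text \<open>If a region has a single feeder carrying the same momentum as \<open>L\<close>, the region is a
  self-energy cluster: a single node of mode \<open>0\<close> if it has no lines, and otherwise a cluster
  on the largest scale \<open>q < p\<close> of its lines.\<close>
lemma region_self_energy:
  assumes "L \<in> high" "feeders L = {x}" "mom V par \<nu> L = mom V par \<nu> x"
  shows "self_energy V par \<nu> sc (region L)"
proof (cases "lines_in par (region L) = {}")
  case True
  then have "region L = {L}" using region_without_lines assms(1) by blast
  moreover have "\<nu> L = 0" using momentum_decomposition[OF assms(1)] assms(2,3) \<open>region L = {L}\<close> by simp
  moreover have "L \<in> V" using assms(1) high_sub_T T_sub by blast
  ultimately show ?thesis
    using entering_region[OF assms(1)] assms(2) unfolding self_energy_def by auto
next
  case False
  define q where "q = Max (sc ` lines_in par (region L))"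
  have "lines_in par (region L) \<subseteq> T" using region_sub_T unfolding lines_in_def by blast
  then have "finite (lines_in par (region L))" using finite_T finite_subset by blast
  then have q: "q \<in> sc ` lines_in par (region L)" "\<And>v. v \<in> lines_in par (region L) \<Longrightarrow> sc v \<le> q"
    unfolding q_def using False by auto
  then have "q < p" using region_lines_scale[OF assms(1)] by blast
  have "scale_le_sub V par sc q (region L)"
    unfolding scale_le_sub_def using region_sub_T T_sub region_connected[OF assms(1)] q(2) by blast
  then have "cluster V par sc q (region L)"
    unfolding cluster_def using region_maximal[OF assms(1) \<open>q < p\<close>] q(1) by blast
  then show ?thesis
    using entering_region[OF assms(1)] exiting_region[OF assms(1)] assms(2,3)
    unfolding self_energy_def self_energy_on_def by blast
qed

text \<open>By renormalisation, a single feeder always changes the momentum.\<close>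
lemma single_feeder_momentum_differs:
  assumes "L \<in> high" "feeders L = {x}" shows "mom V par \<nu> L \<noteq> mom V par \<nu> x"
  using region_self_energy[OF assms] renorm region_proper[OF assms(1)] unfolding renormalised_def by blast


text \<open>A region with at most one feeder carries modes of total norm at least \<open>E\<close>: their sum
  is \<open>\<nu>\<^sub>L\<close> or the non-zero difference \<open>\<nu>\<^sub>L - \<nu>\<^sub>x\<close>.\<close>
lemma region_weight:
  assumes "L \<in> high" "card (feeders L) \<le> 1" shows "E \<le> real_of_int (Kf \<nu> (region L))"
proof -
  have L: "L \<in> V" "par L \<noteq> None" "p \<le> sc L"
    using assms(1) high_sub_T T_sub high_parent[OF assms(1)] by (auto simp: high_def)
  have "norm1 (sum \<nu> (region L)) \<le> Kf \<nu> (region L)" unfolding Kf_def by (rule norm1_sum_le)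
  moreover have "E \<le> real_of_int (norm1 (sum \<nu> (region L)))"
  proof (cases "feeders L = {}")
    case True
    then show ?thesis using momentum_decomposition[OF assms(1)] momentum_large[OF L] by simp
  next
    case False
    then obtain x where x: "feeders L = {x}" using assms(2) finite_feeders
      by (metis card_0_eq card_1_singletonE le_neq_implies_less less_one)
    then have "x \<in> marked" using feeders_sub_marked by blast
    then have "x \<in> V" "par x \<noteq> None" "p \<le> sc x" using marked_sub_V marked_parent[of x] marked_scale by auto
    then have "E \<le> real_of_int (norm1 (mom V par \<nu> L - mom V par \<nu> x))"
      using momentum_gap[OF L(1) _ L(2) _ L(3)] single_feeder_momentum_differs[OF assms(1) x] by blast
    moreover have "mom V par \<nu> L - mom V par \<nu> x = sum \<nu> (region L)"
      using momentum_decomposition[OF assms(1)] x by simp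
    ultimately show ?thesis by simp
  qed
  ultimately show ?thesis by linarith
qed

lemma regions_disjoint:
  assumes "L \<in> high" "L' \<in> high" "L \<noteq> L'" "w \<in> region L" "w \<in> region L'" shows False
proof -
  have False if "L \<in> high" "a < a'" "up par a w = Some L" "up par a' w = Some L'" "w \<in> region L'"
    for L L' a a'
    using region_no_mark_before[OF that(5,4)] that(1-3) unfolding marked_def by blast
  moreover obtain a where "up par a w = Some L" using assms(4) unfolding region_def by blast
  moreover obtain a' where "up par a' w = Some L'" using assms(5) unfolding region_def by blast
  ultimately show False using assms by (metis linorder_neq_iff option.inject)
qed

lemma feeders_disjoint: "L \<in> high \<Longrightarrow> L' \<in> high \<Longrightarrow> L \<noteq> L' \<Longrightarrow> feeders L \<inter> feeders L' = {}"
  using regions_disjoint unfolding feeders_def by auto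

text \<open>The marked line with the largest subtree feeds no region.\<close>
lemma unfed_mark_exists: "\<exists>x\<in>marked. \<forall>L\<in>high. x \<notin> feeders L"
proof (rule ccontr)
  assume H: "\<not> ?thesis"
  define h where "h x = card (subtree x)" for x
  have "Max (h ` marked) \<in> h ` marked" using finite_marked unfolding marked_def by (intro Max_in) auto
  then obtain x where x: "x \<in> marked" "h x = Max (h ` marked)" by (metis imageE)
  obtain L where L: "L \<in> high" "x \<in> feeders L" using H x(1) by blast
  have "L \<in> V" using L(1) high_sub_T T_sub by blast
  have "L \<notin> subtree x"
  proof
    assume "L \<in> subtree x"
    then obtain b where "up par b L = Some x" unfolding preceq_def by blast
    moreover obtain c where "up par (Suc c) x = Some L" using feeder_reaches[OF L(2)] by blast
    ultimately have "up par (Suc (b + c)) L = Some L" using up_add[of par b "Suc c" L] by simp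
    then show False using up_Suc_not_self[OF tree \<open>L \<in> V\<close>] by blast
  qed
  moreover have "L \<in> subtree L" using \<open>L \<in> V\<close> unfolding preceq_def by (auto intro: exI[of _ 0])
  moreover have "subtree x \<subseteq> subtree L" using subtree_feeder[OF L(2)] by blast
  ultimately have "h x < h L" unfolding h_def using finite_subtree by (intro psubset_card_mono) auto
  moreover have "h L \<le> Max (h ` marked)" using finite_marked L(1) unfolding marked_def by simp
  ultimately show False using x(2) by simp
qed

text \<open>Feeder sets are disjoint subsets of the marked lines missing at least one of them, so
  there are at most \<open>|high|\<close> feeders in total; hence at least half of the high lines have at
  most one feeder.\<close>
lemma half_have_few_feeders: "card high \<le> 2 * card {L \<in> high. card (feeders L) \<le> 1}"
proof -
  have "(\<Sum>L\<in>high. card (feeders L)) = card (\<Union>L\<in>high. feeders L)"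
    using finite_high finite_feeders feeders_disjoint by (subst card_UN_disjoint) auto
  also have "\<dots> < card marked"
    using unfed_mark_exists feeders_sub_marked by (intro psubset_card_mono[OF finite_marked]) blast
  finally have feeders_total: "(\<Sum>L\<in>high. card (feeders L)) \<le> card high" using card_marked by simp
  have "(\<Sum>L\<in>high. 2::nat) \<le> (\<Sum>L\<in>high. card (feeders L) + (if card (feeders L) \<le> 1 then 2 else 0))"
    by (intro sum_mono) auto
  also have "\<dots> = (\<Sum>L\<in>high. card (feeders L)) + (\<Sum>L\<in>high. if card (feeders L) \<le> 1 then 2 else 0)"
    by (rule sum.distrib)
  also have "(\<Sum>L\<in>high. if card (feeders L) \<le> 1 then 2 else 0) = (\<Sum>L\<in>{L \<in> high. card (feeders L) \<le> 1}. 2::nat)"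
    using finite_high by (subst sum.inter_filter) auto
  finally show ?thesis using feeders_total by simp
qed

theorem card_high_bound: assumes "0 \<le> E" shows "real (card high) * E \<le> 2 * real_of_int (Kf \<nu> T)"
proof -
  define C where "C = {L \<in> high. card (feeders L) \<le> 1}"
  have "finite C" using finite_high unfolding C_def by simp
  have "real (card C) * E \<le> (\<Sum>L\<in>C. real_of_int (Kf \<nu> (region L)))"
    using region_weight sum_mono[of C "\<lambda>_. E"] unfolding C_def by simp
  also have "\<dots> = real_of_int (\<Sum>v\<in>(\<Union>L\<in>C. region L). norm1 (\<nu> v))"
    unfolding Kf_def of_int_sum[symmetric] using \<open>finite C\<close> finite_T region_sub_T regions_disjoint
    by (subst sum.UNION_disjoint) (auto simp: C_def intro: finite_subset)
  also have "\<dots> \<le> real_of_int (Kf \<nu> T)"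
    unfolding Kf_def of_int_le_iff using region_sub_T norm1_nonneg by (intro sum_mono2 finite_T) auto
  finally have "real (card C) * E \<le> real_of_int (Kf \<nu> T)" .
  moreover have "real (card high) * E \<le> 2 * real (card C) * E"
    using half_have_few_feeders assms unfolding C_def by (intro mult_right_mono) linarith+
  ultimately show ?thesis by linarith
qed

end


subsection \<open>Momenta of high-scale lines are large and well separated\<close>

text \<open>A non-zero \<open>\<mu>\<close> with |omega.mu| < alpha_(m_p - 1) has |mu| > 2^(m_p - 1); for \<open>p = 0\<close> we only
  use \<open>|\<mu>| \<ge> 1\<close>.\<close>
lemma norm1_lower_bound:
  fixes \<omega> :: "real^'d"
  assumes "\<mu> \<noteq> 0" "p = 0 \<or> \<bar>dotp \<omega> \<mu>\<bar> < alpha \<omega> (mseq \<omega> p - 1)"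
  shows "2 ^ mseq \<omega> p / 2 \<le> real_of_int (norm1 \<mu>)"
proof (cases "p = 0")
  case True then show ?thesis using norm1_ge_1[OF assms(1)] by simp
next
  case False
  then have "\<bar>dotp \<omega> \<mu>\<bar> < alpha \<omega> (mseq \<omega> p - 1)" using assms(2) by blast
  moreover have "0 < norm1 \<mu>" using norm1_ge_1[OF assms(1)] by simp
  ultimately have "(2::int) ^ (mseq \<omega> p - 1) \<le> norm1 \<mu>"
    using norm1_gt_of_small_divisor by fastforce
  then have "(2::real) ^ (mseq \<omega> p - 1) \<le> real_of_int (norm1 \<mu>)"
    by (metis of_int_le_iff of_int_numeral of_int_power)
  moreover obtain k where "mseq \<omega> p = Suc k" using False by (cases p) auto
  ultimately show ?thesis by simp
qed

lemma high_scale_cluster_from_cutoffs: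
  fixes \<omega> :: "real^'d"
  assumes "CARD('d) \<ge> 2" "bryuno \<omega>" "cutoff chi" and lab: "labelled_tree V par \<nu> sc"
    and Psi: "\<forall>v\<in>V. sc v \<ge> 0 \<longrightarrow> PsiN chi \<omega> (nat (sc v)) (dotp \<omega> (mom V par \<nu> v)) \<noteq> 0"
    and "T \<subseteq> V" "entering V par T = {e}" "int p \<le> sc e" "renormalised V par \<nu> sc T"
  shows "high_scale_cluster V par \<nu> sc T (int p) e (2 ^ mseq \<omega> p / 2)"
proof
  show "is_tree V par" using lab unfolding labelled_tree_def by blast
  have small: "\<bar>dotp \<omega> (mom V par \<nu> v)\<bar> < alpha \<omega> (mseq \<omega> p - 1) / 2"
    if "v \<in> V" "int p \<le> sc v" "p \<noteq> 0" for v
    using PsiN_support[OF assms(1-3), of p "nat (sc v)"] Psi that by auto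
  have nonzero: "mom V par \<nu> v \<noteq> 0" if "v \<in> V" "par v \<noteq> None" for v
    using lab that unfolding labelled_tree_def by blast
  have alpha_pos: "0 < alpha \<omega> (mseq \<omega> p - 1)" using alpha_pos[OF assms(2)] .
  fix v assume v: "v \<in> V" "par v \<noteq> None" "int p \<le> sc v"
  have "p = 0 \<or> \<bar>dotp \<omega> (mom V par \<nu> v)\<bar> < alpha \<omega> (mseq \<omega> p - 1)"
    using small[OF v(1,3)] alpha_pos by (cases "p = 0") auto
  then show "2 ^ mseq \<omega> p / 2 \<le> real_of_int (norm1 (mom V par \<nu> v))"
    using norm1_lower_bound[OF nonzero[OF v(1,2)]] by blast
  fix x assume x: "x \<in> V" "par x \<noteq> None" "int p \<le> sc x" "mom V par \<nu> v \<noteq> mom V par \<nu> x"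
  have "p = 0 \<or> \<bar>dotp \<omega> (mom V par \<nu> v - mom V par \<nu> x)\<bar> < alpha \<omega> (mseq \<omega> p - 1)"
  proof (cases "p = 0")
    case False
    then show ?thesis using small[OF v(1,3) False] small[OF x(1,3) False] unfolding dotp_diff by linarith
  qed simp
  moreover have "mom V par \<nu> v - mom V par \<nu> x \<noteq> 0" using x(4) by simp
  ultimately show "2 ^ mseq \<omega> p / 2 \<le> real_of_int (norm1 (mom V par \<nu> v - mom V par \<nu> x))"
    using norm1_lower_bound by blast
qed (use assms(6-9) in auto)

theorem lemma3p5:
  fixes \<omega> :: "real^'d" and chi :: "real \<Rightarrow> real"
    and V :: "'v set" and par :: "'v \<Rightarrow> 'v option"
    and \<nu> :: "'v \<Rightarrow> int^'d" and sc :: "'v \<Rightarrow> int"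
    and T :: "'v set" and n :: nat
  assumes "CARD('d) \<ge> 2"
    and "bryuno \<omega>"
    and "cutoff chi"
    and "labelled_tree V par \<nu> sc"
    and "\<forall>v\<in>V. sc v \<ge> 0 \<longrightarrow> PsiN chi \<omega> (nat (sc v)) (dotp \<omega> (mom V par \<nu> v)) \<noteq> 0"
    and "self_energy_on V par \<nu> sc (int n) T"
    and "renormalised V par \<nu> sc T"
  shows "\<forall>p\<le>n. real (Np par sc (int p) T)
            \<le> 2 powr (- (real (mseq \<omega> p) - 2)) * real_of_int (Kf \<nu> T)"
proof (intro allI impI)
  fix p assume "p \<le> n"
  obtain l e where cl: "cluster V par sc (int n) T" and ent: "entering V par T = {e}"
    and ex: "exiting par T = {l}"
    using assms(6) unfolding self_energy_on_def by blast
  have tree: "is_tree V par" using assms(4) unfolding labelled_tree_def by blast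
  have "T \<subseteq> V" using cl unfolding cluster_def scale_le_sub_def by blast
  moreover have "int p \<le> sc e" using entering_scale_gt[OF tree cl ent ex] \<open>p \<le> n\<close> by simp
  ultimately interpret high_scale_cluster V par \<nu> sc T "int p" e "2 ^ mseq \<omega> p / 2"
    using high_scale_cluster_from_cutoffs[OF assms(1-5)] ent assms(7) by blast
  have "real (Np par sc (int p) T) * (2 ^ mseq \<omega> p / 2) \<le> 2 * real_of_int (Kf \<nu> T)"
    using card_high_bound unfolding Np_def high_def by simp
  then have "real (Np par sc (int p) T) \<le> 4 / 2 ^ mseq \<omega> p * real_of_int (Kf \<nu> T)"
    by (simp add: pos_le_divide_eq field_simps)
  moreover have "(2::real) powr (- (real (mseq \<omega> p) - 2)) = 4 / 2 ^ mseq \<omega> p"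
    by (simp add: powr_diff powr_realpow)
  ultimately show "real (Np par sc (int p) T) \<le> 2 powr (- (real (mseq \<omega> p) - 2)) * real_of_int (Kf \<nu> T)"
    by simp
qed

end
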